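(* Let $A = (a_{ij}) \in \mathbb{R}^{p \times n}$, let $1 \leq k \leq p$, let $l, u \in \mathbb{R}^n$ with $l_j \leq u_j$ for all $j$, let $P \subseteq \{1, \ldots, p\}$ with $|P| \geq k$, and let $\beta \in [0,1]^n$. Then for all $x \in \mathbb{R}^n$ with $l_j \leq x_j \leq u_j$ for all $j$, $$Q_k(Ax) \geq \sum_{j=1}^n (1 - \beta_j)\left(\min_{i \in P} a_{ij}\right)(x_j - l_j) + \sum_{j=1}^n \beta_j \left(\max_{i \in P} a_{ij}\right)(x_j - u_j) + \min_{i \in P}\sum_{j=1}^n (1 - \beta_j) a_{ij} l_j + \min_{i \in P}\sum_{j=1}^n \beta_j a_{ij} u_j.$$
   Context: For $y \in \mathbb{R}^p$ and an integer $1 \leq k \leq p$, $Q_k(y)$ denotes the $k$-th largest entry of $y$ (entries counted with multiplicity). *)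

theory Defs
  imports "HOL-Analysis.Analysis" "HOL-Library.Multiset"
begin

text \<open>The k-th largest entry (1-based, counted with multiplicity) of a vector y in R^p,
  where the index set is the finite type 'p.\<close>
definition kth_largest :: "nat \<Rightarrow> real ^ 'p \<Rightarrow> real" where
  "kth_largest k y =
     rev (sorted_list_of_multiset (image_mset (\<lambda>i. y $ i) (mset_set (UNIV :: 'p set)))) ! (k - 1)"

end

theory Submission
  imports Defs
begin

text \<open>For each row i, writing x_j = (x_j - l_j) + l_j with weight 1 - \<beta>_j and
  x_j = (x_j - u_j) + u_j with weight \<beta>_j splits (Ax)_i into four sums; bounding a_ij
  termwise by the column minimum (against x_j - l_j \<ge> 0) or maximum (against
  x_j - u_j \<le> 0), and the two row sums by their minima over P, shows that every
  entry (Ax)_i with i \<in> P is at least the right-hand side. Since |P| \<ge> k, at least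
  k entries of Ax are that large, hence so is the k-th largest.\<close>

lemma sorted_rev_nth_lower_bound:
  fixes xs :: "'a::linorder list"
  assumes sorted: "sorted xs" and "1 \<le> k"
    and enough: "k \<le> length (filter (\<lambda>v. R \<le> v) xs)"
  shows "R \<le> rev xs ! (k - 1)"
proof (rule ccontr)
  define m where "m = length xs - k"
  have "k \<le> length xs" using enough by (metis length_filter_le order_trans)
  then have m: "m < length xs" "rev xs ! (k - 1) = xs ! m"
    using \<open>1 \<le> k\<close> by (auto simp: m_def rev_nth)
  assume "\<not> R \<le> rev xs ! (k - 1)"
  then have "xs ! i < R" if "i \<le> m" for i
    using that sorted m le_less_trans[OF sorted_nth_mono[of xs i m]] by simp
  then have "v < R" if "v \<in> set (take (Suc m) xs)" for v
    using that by (auto simp: in_set_conv_nth)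
  then have "filter (\<lambda>v. R \<le> v) (take (Suc m) xs) = []"
    by (simp add: filter_empty_conv not_le)
  then have "length (filter (\<lambda>v. R \<le> v) xs) = length (filter (\<lambda>v. R \<le> v) (drop (Suc m) xs))"
    by (metis append_take_drop_id filter_append self_append_conv2)
  also have "\<dots> \<le> length (drop (Suc m) xs)" by (rule length_filter_le)
  also have "\<dots> < k" using m \<open>1 \<le> k\<close> by (simp add: m_def)
  finally show False using enough by simp
qed

lemma kth_largest_lower_bound:
  fixes y :: "real ^ 'p" and P :: "'p set"
  assumes "1 \<le> k" and "k \<le> card P" and "\<forall>i\<in>P. R \<le> y $ i"
  shows "R \<le> kth_largest k y"
proof -
  define M where "M = image_mset (\<lambda>i. y $ i) (mset_set (UNIV :: 'p set))"
  have "card P \<le> card {i. R \<le> y $ i}"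
    using assms(3) by (intro card_mono) auto
  with assms(2) have "k \<le> card {i. R \<le> y $ i}" by linarith
  also have "\<dots> = size (filter_mset (\<lambda>v. R \<le> v) M)"
    by (simp add: M_def filter_mset_image_mset filter_mset_mset_set)
  also have "\<dots> = length (filter (\<lambda>v. R \<le> v) (sorted_list_of_multiset M))"
    by (metis mset_sorted_list_of_multiset mset_filter size_mset)
  finally show ?thesis
    unfolding kth_largest_def M_def[symmetric]
    using sorted_rev_nth_lower_bound[OF sorted_sorted_list_of_multiset \<open>1 \<le> k\<close>] by blast
qed

lemma matrix_vector_mult_row_split:
  fixes A :: "real ^ 'n ^ 'p"
  shows "(A *v x) $ i =
      (\<Sum>j\<in>UNIV. (1 - \<beta> $ j) * A $ i $ j * (x $ j - l $ j))
    + (\<Sum>j\<in>UNIV. \<beta> $ j * A $ i $ j * (x $ j - u $ j))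
    + (\<Sum>j\<in>UNIV. (1 - \<beta> $ j) * A $ i $ j * l $ j)
    + (\<Sum>j\<in>UNIV. \<beta> $ j * A $ i $ j * u $ j)"
  by (simp add: matrix_vector_mult_def sum.distrib[symmetric] algebra_simps)

lemma matrix_vector_mult_row_lower_bound:
  fixes A :: "real ^ 'n ^ 'p"
  assumes "finite P" and "i \<in> P"
    and \<beta>: "\<forall>j. 0 \<le> \<beta> $ j \<and> \<beta> $ j \<le> 1"
    and x: "\<forall>j. l $ j \<le> x $ j \<and> x $ j \<le> u $ j"
  shows "(\<Sum>j\<in>UNIV. (1 - \<beta> $ j) * Min ((\<lambda>i. A $ i $ j) ` P) * (x $ j - l $ j))
    + (\<Sum>j\<in>UNIV. \<beta> $ j * Max ((\<lambda>i. A $ i $ j) ` P) * (x $ j - u $ j))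
    + Min ((\<lambda>i. \<Sum>j\<in>UNIV. (1 - \<beta> $ j) * A $ i $ j * l $ j) ` P)
    + Min ((\<lambda>i. \<Sum>j\<in>UNIV. \<beta> $ j * A $ i $ j * u $ j) ` P)
    \<le> (A *v x) $ i"
proof -
  have lower: "(1 - \<beta> $ j) * Min ((\<lambda>i. A $ i $ j) ` P) * (x $ j - l $ j)
      \<le> (1 - \<beta> $ j) * A $ i $ j * (x $ j - l $ j)" for j
  proof -
    have "Min ((\<lambda>i. A $ i $ j) ` P) \<le> A $ i $ j" using assms(1,2) by simp
    then show ?thesis using \<beta> x by (intro mult_right_mono mult_left_mono) auto
  qed
  have upper: "\<beta> $ j * Max ((\<lambda>i. A $ i $ j) ` P) * (x $ j - u $ j)
      \<le> \<beta> $ j * A $ i $ j * (x $ j - u $ j)" for j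
  proof -
    have "A $ i $ j \<le> Max ((\<lambda>i. A $ i $ j) ` P)" using assms(1,2) by simp
    then show ?thesis using \<beta> x by (intro mult_right_mono_neg mult_left_mono) auto
  qed
  have "(\<Sum>j\<in>UNIV. (1 - \<beta> $ j) * Min ((\<lambda>i. A $ i $ j) ` P) * (x $ j - l $ j))
      \<le> (\<Sum>j\<in>UNIV. (1 - \<beta> $ j) * A $ i $ j * (x $ j - l $ j))"
    by (intro sum_mono lower)
  moreover have "(\<Sum>j\<in>UNIV. \<beta> $ j * Max ((\<lambda>i. A $ i $ j) ` P) * (x $ j - u $ j))
      \<le> (\<Sum>j\<in>UNIV. \<beta> $ j * A $ i $ j * (x $ j - u $ j))"
    by (intro sum_mono upper)
  moreover have "Min ((\<lambda>i. \<Sum>j\<in>UNIV. (1 - \<beta> $ j) * A $ i $ j * l $ j) ` P)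
      \<le> (\<Sum>j\<in>UNIV. (1 - \<beta> $ j) * A $ i $ j * l $ j)"
    and "Min ((\<lambda>i. \<Sum>j\<in>UNIV. \<beta> $ j * A $ i $ j * u $ j) ` P)
      \<le> (\<Sum>j\<in>UNIV. \<beta> $ j * A $ i $ j * u $ j)"
    using assms(1,2) by simp_all
  ultimately show ?thesis
    unfolding matrix_vector_mult_row_split[of A x i \<beta> l u] by linarith
qed

theorem theorem9:
  fixes A :: "real ^ 'n ^ 'p" and k :: nat and l u x \<beta> :: "real ^ 'n" and P :: "'p set"
  assumes "1 \<le> k" and "k \<le> CARD('p)"
    and "\<forall>j. l $ j \<le> u $ j"
    and "card P \<ge> k"
    and "\<forall>j. 0 \<le> \<beta> $ j \<and> \<beta> $ j \<le> 1"
    and "\<forall>j. l $ j \<le> x $ j \<and> x $ j \<le> u $ j"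
  shows "kth_largest k (A *v x) \<ge>
      (\<Sum>j\<in>UNIV. (1 - \<beta> $ j) * Min ((\<lambda>i. A $ i $ j) ` P) * (x $ j - l $ j))
    + (\<Sum>j\<in>UNIV. \<beta> $ j * Max ((\<lambda>i. A $ i $ j) ` P) * (x $ j - u $ j))
    + Min ((\<lambda>i. \<Sum>j\<in>UNIV. (1 - \<beta> $ j) * A $ i $ j * l $ j) ` P)
    + Min ((\<lambda>i. \<Sum>j\<in>UNIV. \<beta> $ j * A $ i $ j * u $ j) ` P)"
  using assms(5,6)
  by (intro kth_largest_lower_bound[OF assms(1,4)] ballI matrix_vector_mult_row_lower_bound) auto

end
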